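(* Let $\mathbf{H}\in\mathbb{H}^4$. The following are equivalent: (1) $\mathbf{Cov}_2(\mathbf{H})$ is isotropic; (2) $\mathbf{H}$ is either cubic (when $\mathbf{d}_2\neq0$) or isotropic (when $\mathbf{d}_2=0$); (3) $\mathbf{d}_2$ is isotropic.
   Context: $\mathbb{H}^4$ is the space of totally symmetric traceless fourth-order tensors on $\mathbb{R}^3$, with $SO(3)$-action $(g\star\mathbf{T})(x_1,\dots,x_n)=\mathbf{T}(g^{-1}x_1,\dots,g^{-1}x_n)$. $\mathbf{Cov}_2(\mathbf{H})\subset\mathrm{Sym}^2(\mathbb{R}^3)$ is the set of values at $\mathbf{H}$ of all $SO(3)$-equivariant polynomial maps $\mathbb{H}^4\to\mathrm{Sym}^2(\mathbb{R}^3)$. $(\mathbf{H}:\mathbf{H})_{ijkl}=H_{ijmn}H_{mnkl}$, $(\operatorname{tr}_{13}\mathbf{A})_{ij}=A_{kikj}$, $\mathbf{d}_2=\operatorname{tr}_{13}(\mathbf{H}:\mathbf{H})$. Symmetry group of a tensor: $\{g\in SO(3):g\star\mathbf{T}=\mathbf{T}\}$; of a family (or subspace): intersection of its members' groups; symmetry class: conjugacy class in $SO(3)$. Isotropic means class $[SO(3)]$; cubic means class $[\mathbb{O}]$, $\mathbb{O}$ the orientation-preserving symmetry group of a cube (order 24). *)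

theory Defs
  imports "HOL-Analysis.Analysis"
begin

text \<open>Tensors on R^3 in components w.r.t. the standard basis; indices range over the type 3.\<close>

type_synonym tensor2 = "3 \<Rightarrow> 3 \<Rightarrow> real"
type_synonym tensor4 = "3 \<Rightarrow> 3 \<Rightarrow> 3 \<Rightarrow> 3 \<Rightarrow> real"
type_synonym mat3 = "real^3^3"

definition SO3 :: "mat3 set" where
  "SO3 = {g. orthogonal_matrix g \<and> det g = 1}"

text \<open>(g * T)(x1,...,xn) = T(g^{-1} x1, ..., g^{-1} xn), written in components
  (g^{-1} = transpose g for g in SO(3)).\<close>
definition act2 :: "mat3 \<Rightarrow> tensor2 \<Rightarrow> tensor2" where
  "act2 g T = (\<lambda>i j. \<Sum>a\<in>UNIV. \<Sum>b\<in>UNIV. g$i$a * g$j$b * T a b)"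

definition act4 :: "mat3 \<Rightarrow> tensor4 \<Rightarrow> tensor4" where
  "act4 g T = (\<lambda>i j k l. \<Sum>a\<in>UNIV. \<Sum>b\<in>UNIV. \<Sum>c\<in>UNIV. \<Sum>d\<in>UNIV.
      g$i$a * g$j$b * g$k$c * g$l$d * T a b c d)"

definition Sym2 :: "tensor2 set" where
  "Sym2 = {S. \<forall>i j. S i j = S j i}"

text \<open>H^4: totally symmetric (invariant under the transpositions generating S_4) and traceless.\<close>
definition H4 :: "tensor4 set" where
  "H4 = {T. (\<forall>i j k l. T i j k l = T j i k l \<and> T i j k l = T i k j l \<and> T i j k l = T i j l k)
            \<and> (\<forall>k l. (\<Sum>i\<in>UNIV. T i i k l) = 0)}"

inductive polyfun :: "(tensor4 \<Rightarrow> real) \<Rightarrow> bool" where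
  pf_const: "polyfun (\<lambda>T. c)"
| pf_coord: "polyfun (\<lambda>T. T i j k l)"
| pf_add: "polyfun p \<Longrightarrow> polyfun q \<Longrightarrow> polyfun (\<lambda>T. p T + q T)"
| pf_mult: "polyfun p \<Longrightarrow> polyfun q \<Longrightarrow> polyfun (\<lambda>T. p T * q T)"

definition equiv_poly_map2 :: "(tensor4 \<Rightarrow> tensor2) \<Rightarrow> bool" where
  "equiv_poly_map2 F \<longleftrightarrow>
     (\<forall>i j. polyfun (\<lambda>T. F T i j))
   \<and> (\<forall>T\<in>H4. F T \<in> Sym2)
   \<and> (\<forall>g\<in>SO3. \<forall>T\<in>H4. F (act4 g T) = act2 g (F T))"

definition Cov2 :: "tensor4 \<Rightarrow> tensor2 set" where
  "Cov2 H = {F H | F. equiv_poly_map2 F}"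

definition symgroup2 :: "tensor2 \<Rightarrow> mat3 set" where
  "symgroup2 S = {g\<in>SO3. act2 g S = S}"

definition symgroup4 :: "tensor4 \<Rightarrow> mat3 set" where
  "symgroup4 T = {g\<in>SO3. act4 g T = T}"

definition symgroup2_fam :: "tensor2 set \<Rightarrow> mat3 set" where
  "symgroup2_fam F = {g\<in>SO3. \<forall>S\<in>F. g \<in> symgroup2 S}"

definition in_class :: "mat3 set \<Rightarrow> mat3 set \<Rightarrow> bool" where
  "in_class G C \<longleftrightarrow> (\<exists>g\<in>SO3. G = (\<lambda>h. g ** h ** matrix_inv g) ` C)"

definition cube :: "(real^3) set" where
  "cube = {x. \<forall>i. \<bar>x$i\<bar> \<le> 1}"

definition Octa :: "mat3 set" where
  "Octa = {g\<in>SO3. (\<lambda>x. g *v x) ` cube = cube}"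

definition d2 :: "tensor4 \<Rightarrow> tensor2" where
  "d2 H = (\<lambda>i j. \<Sum>k\<in>UNIV. \<Sum>m\<in>UNIV. \<Sum>n\<in>UNIV. H k i m n * H m n k j)"

end

theory Submission
  imports Defs
begin

text \<open>
  The covariant d2 belongs to Cov2(H), so isotropy of Cov2(H) forces isotropy of d2. Conversely,
  if H is cubic its symmetry group is a conjugate of the octahedral group, and a symmetric matrix
  fixed by the octahedral group is scalar, so every quadratic covariant of H is isotropic; for
  isotropic H this is immediate.

  The substance is that a nonzero harmonic H with isotropic d2 is cubic. Rotate H so that e3
  maximises H(x,x,x,x)^2 on the unit sphere and e1 maximises it on the equator. The first-order
  conditions at these maxima kill three of the nine harmonic coordinates, isotropy of d2 gives five
  polynomial equations in the remaining six, and evaluating the maximality inequalities at a few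
  points excludes every solution except the multiples of the cubic tensor.
\<close>

section \<open>Orthogonal matrices and SO(3)\<close>

lemma sum_rotate3:
  "(\<Sum>k\<in>A. \<Sum>m\<in>B. \<Sum>n\<in>C. F k m n) = (\<Sum>m\<in>B. \<Sum>n\<in>C. \<Sum>k\<in>A. F k m n)"
  by (simp add: sum.swap[of _ A])

lemma orthogonal_matrix_columns_inner:
  fixes g :: "real^'n^'n"
  assumes "orthogonal_matrix g"
  shows "(\<Sum>k\<in>UNIV. g$k$a * g$k$b) = (if a = b then 1 else 0)"
proof -
  have "(transpose g ** g)$a$b = (mat 1 :: real^'n^'n)$a$b"
    using assms by (simp add: orthogonal_matrix_def)
  then show ?thesis by (simp add: matrix_matrix_mult_def transpose_def mat_def)
qed

lemma orthogonal_matrix_rows_inner: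
  fixes g :: "real^'n^'n"
  assumes "orthogonal_matrix g"
  shows "(\<Sum>k\<in>UNIV. g$a$k * g$b$k) = (if a = b then 1 else 0)"
proof -
  have "(g ** transpose g)$a$b = (mat 1 :: real^'n^'n)$a$b"
    using assms by (simp add: orthogonal_matrix_def)
  then show ?thesis by (simp add: matrix_matrix_mult_def transpose_def mat_def)
qed

lemma orthogonal_matrix_inner_sums:
  fixes g :: "real^'n^'n"
  assumes "orthogonal_matrix g"
  shows "(\<Sum>k\<in>UNIV. (\<Sum>b\<in>UNIV. g$k$b * u b) * (\<Sum>c\<in>UNIV. g$k$c * v c)) = (\<Sum>b\<in>UNIV. u b * v b)"
proof -
  have "(\<Sum>k\<in>UNIV. (\<Sum>b\<in>UNIV. g$k$b * u b) * (\<Sum>c\<in>UNIV. g$k$c * v c))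
      = (\<Sum>k\<in>UNIV. \<Sum>c\<in>UNIV. \<Sum>b\<in>UNIV. (g$k$b * g$k$c) * (u b * v c))"
    by (simp add: sum_distrib_left sum_distrib_right mult_ac)
  also have "\<dots> = (\<Sum>c\<in>UNIV. \<Sum>b\<in>UNIV. \<Sum>k\<in>UNIV. (g$k$b * g$k$c) * (u b * v c))"
    by (rule sum_rotate3)
  also have "\<dots> = (\<Sum>c\<in>UNIV. \<Sum>b\<in>UNIV. (\<Sum>k\<in>UNIV. g$k$b * g$k$c) * (u b * v c))"
    by (simp add: sum_distrib_right)
  also have "\<dots> = (\<Sum>b\<in>UNIV. u b * v b)"
    by (simp add: orthogonal_matrix_columns_inner[OF assms] mult_if_delta)
  finally show ?thesis .
qed

lemma orthogonal_matrix_trace_sums: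
  fixes g :: "real^'n^'n"
  assumes "orthogonal_matrix g"
  shows "(\<Sum>i\<in>UNIV. \<Sum>a\<in>UNIV. g$i$a * (\<Sum>b\<in>UNIV. g$i$b * W a b)) = (\<Sum>a\<in>UNIV. W a a)"
proof -
  have "(\<Sum>i\<in>UNIV. \<Sum>a\<in>UNIV. g$i$a * (\<Sum>b\<in>UNIV. g$i$b * W a b))
      = (\<Sum>i\<in>UNIV. \<Sum>a\<in>UNIV. \<Sum>b\<in>UNIV. (g$i$a * g$i$b) * W a b)"
    by (simp add: sum_distrib_left mult.assoc)
  also have "\<dots> = (\<Sum>a\<in>UNIV. \<Sum>b\<in>UNIV. \<Sum>i\<in>UNIV. (g$i$a * g$i$b) * W a b)"
    by (rule sum_rotate3)
  also have "\<dots> = (\<Sum>a\<in>UNIV. \<Sum>b\<in>UNIV. (\<Sum>i\<in>UNIV. g$i$a * g$i$b) * W a b)"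
    by (simp add: sum_distrib_right)
  also have "\<dots> = (\<Sum>a\<in>UNIV. W a a)"
    by (simp add: orthogonal_matrix_columns_inner[OF assms] mult_if_delta)
  finally show ?thesis .
qed

lemma matrix_inv_orthogonal:
  fixes g :: "real^'n^'n"
  assumes "orthogonal_matrix g"
  shows "matrix_inv g = transpose g"
  unfolding matrix_inv_def
proof (rule some_equality)
  show "g ** transpose g = mat 1 \<and> transpose g ** g = mat 1"
    using assms by (simp add: orthogonal_matrix_def)
next
  fix A assume A: "g ** A = mat 1 \<and> A ** g = mat 1"
  have "A = (transpose g ** g) ** A" using assms by (simp add: orthogonal_matrix_def)
  also have "\<dots> = transpose g ** (g ** A)" by (simp add: matrix_mul_assoc)
  also have "\<dots> = transpose g" using A by simp
  finally show "A = transpose g" .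
qed

lemma SO3_orthogonal: "g \<in> SO3 \<Longrightarrow> orthogonal_matrix g"
  by (simp add: SO3_def)

lemma SO3_mult: "g \<in> SO3 \<Longrightarrow> h \<in> SO3 \<Longrightarrow> g ** h \<in> SO3"
  by (simp add: SO3_def orthogonal_matrix_mul det_mul)

lemma SO3_transpose: "g \<in> SO3 \<Longrightarrow> transpose g \<in> SO3"
  by (simp add: SO3_def det_transpose)

lemma SO3_one: "mat 1 \<in> SO3"
  by (simp add: SO3_def orthogonal_matrix_id)

lemma SO3_conj: "g \<in> SO3 \<Longrightarrow> h \<in> SO3 \<Longrightarrow> g ** h ** matrix_inv g \<in> SO3"
  by (simp add: matrix_inv_orthogonal SO3_orthogonal SO3_mult SO3_transpose)

lemma conj_image_SO3:
  assumes "g \<in> SO3"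
  shows "(\<lambda>h. g ** h ** matrix_inv g) ` SO3 = SO3"
proof
  show "(\<lambda>h. g ** h ** matrix_inv g) ` SO3 \<subseteq> SO3"
    using assms SO3_conj by blast
next
  have o: "orthogonal_matrix g" using assms by (rule SO3_orthogonal)
  show "SO3 \<subseteq> (\<lambda>h. g ** h ** matrix_inv g) ` SO3"
  proof
    fix h assume h: "h \<in> SO3"
    have "g ** (transpose g ** h ** g) ** transpose g = (g ** transpose g) ** h ** (g ** transpose g)"
      by (simp add: matrix_mul_assoc)
    then have "h = g ** (transpose g ** h ** g) ** transpose g"
      using o by (simp add: orthogonal_matrix_def)
    moreover have "transpose g ** h ** g \<in> SO3" using assms h by (intro SO3_mult SO3_transpose)
    ultimately show "h \<in> (\<lambda>h. g ** h ** matrix_inv g) ` SO3"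
      by (simp add: matrix_inv_orthogonal[OF o])
  qed
qed

lemma in_class_SO3_iff: "in_class G SO3 \<longleftrightarrow> G = SO3"
  unfolding in_class_def using conj_image_SO3 SO3_one by metis

section \<open>The action of SO(3) on tensors\<close>

definition act_slot1 :: "mat3 \<Rightarrow> tensor4 \<Rightarrow> tensor4" where
  "act_slot1 g T = (\<lambda>i j k l. \<Sum>a\<in>UNIV. g$i$a * T a j k l)"
definition act_slot2 :: "mat3 \<Rightarrow> tensor4 \<Rightarrow> tensor4" where
  "act_slot2 g T = (\<lambda>i j k l. \<Sum>a\<in>UNIV. g$j$a * T i a k l)"
definition act_slot3 :: "mat3 \<Rightarrow> tensor4 \<Rightarrow> tensor4" where
  "act_slot3 g T = (\<lambda>i j k l. \<Sum>a\<in>UNIV. g$k$a * T i j a l)"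
definition act_slot4 :: "mat3 \<Rightarrow> tensor4 \<Rightarrow> tensor4" where
  "act_slot4 g T = (\<lambda>i j k l. \<Sum>a\<in>UNIV. g$l$a * T i j k a)"

lemmas act_slot_defs = act_slot1_def act_slot2_def act_slot3_def act_slot4_def

lemma act4_eq_slots: "act4 g T = act_slot1 g (act_slot2 g (act_slot3 g (act_slot4 g T)))"
  unfolding act4_def act_slot_defs by (simp add: sum_distrib_left mult.assoc)

lemma sum_mult_sum_commute:
  fixes X :: "'i \<Rightarrow> 'j \<Rightarrow> 'a::comm_semiring_0"
  shows "(\<Sum>a\<in>A. f a * (\<Sum>b\<in>B. g b * X a b)) = (\<Sum>b\<in>B. g b * (\<Sum>a\<in>A. f a * X a b))"
proof -
  have "(\<Sum>a\<in>A. f a * (\<Sum>b\<in>B. g b * X a b)) = (\<Sum>a\<in>A. \<Sum>b\<in>B. g b * (f a * X a b))"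
    by (simp add: sum_distrib_left mult.left_commute)
  also have "\<dots> = (\<Sum>b\<in>B. \<Sum>a\<in>A. g b * (f a * X a b))" by (rule sum.swap)
  finally show ?thesis by (simp add: sum_distrib_left)
qed

lemma act_slots_commute:
  "act_slot1 h (act_slot2 g X) = act_slot2 g (act_slot1 h X)"
  "act_slot1 h (act_slot3 g X) = act_slot3 g (act_slot1 h X)"
  "act_slot1 h (act_slot4 g X) = act_slot4 g (act_slot1 h X)"
  "act_slot2 h (act_slot3 g X) = act_slot3 g (act_slot2 h X)"
  "act_slot2 h (act_slot4 g X) = act_slot4 g (act_slot2 h X)"
  "act_slot3 h (act_slot4 g X) = act_slot4 g (act_slot3 h X)"
  unfolding act_slot_defs by (intro ext, rule sum_mult_sum_commute)+

lemma sum_matrix_mult: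
  "(\<Sum>a\<in>UNIV. (g ** h :: real^'n^'n)$i$a * f a) = (\<Sum>p\<in>UNIV. g$i$p * (\<Sum>a\<in>UNIV. h$p$a * f a))"
proof -
  have "(\<Sum>a\<in>UNIV. (g ** h :: real^'n^'n)$i$a * f a) = (\<Sum>a\<in>UNIV. \<Sum>p\<in>UNIV. g$i$p * (h$p$a * f a))"
    by (simp add: matrix_matrix_mult_def sum_distrib_right mult.assoc)
  also have "\<dots> = (\<Sum>p\<in>UNIV. \<Sum>a\<in>UNIV. g$i$p * (h$p$a * f a))" by (rule sum.swap)
  finally show ?thesis by (simp add: sum_distrib_left)
qed

lemma act_slots_mult:
  "act_slot1 (g ** h) X = act_slot1 g (act_slot1 h X)"
  "act_slot2 (g ** h) X = act_slot2 g (act_slot2 h X)"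
  "act_slot3 (g ** h) X = act_slot3 g (act_slot3 h X)"
  "act_slot4 (g ** h) X = act_slot4 g (act_slot4 h X)"
  unfolding act_slot_defs by (simp_all add: sum_matrix_mult)

lemma act4_mult: "act4 (g ** h) T = act4 g (act4 h T)"
  unfolding act4_eq_slots act_slots_mult by (simp add: act_slots_commute)

lemma sum_mat1: "(\<Sum>a\<in>UNIV. (mat 1 :: real^'n^'n)$i$a * f a) = f i"
  by (simp add: mat_def mult_if_delta)

lemma act4_one: "act4 (mat 1) T = T"
  unfolding act4_eq_slots act_slot_defs by (simp add: sum_mat1)

lemma act4_transpose_cancel:
  assumes "orthogonal_matrix g"
  shows "act4 (transpose g) (act4 g T) = T" "act4 g (act4 (transpose g) T) = T"
  using assms by (simp_all add: act4_mult[symmetric] orthogonal_matrix_def act4_one)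

definition act2_slot1 :: "mat3 \<Rightarrow> tensor2 \<Rightarrow> tensor2" where
  "act2_slot1 g S = (\<lambda>i j. \<Sum>a\<in>UNIV. g$i$a * S a j)"
definition act2_slot2 :: "mat3 \<Rightarrow> tensor2 \<Rightarrow> tensor2" where
  "act2_slot2 g S = (\<lambda>i j. \<Sum>a\<in>UNIV. g$j$a * S i a)"

lemma act2_eq_slots: "act2 g S = act2_slot1 g (act2_slot2 g S)"
  unfolding act2_def act2_slot1_def act2_slot2_def by (simp add: sum_distrib_left mult.assoc)

lemma act2_mult: "act2 (g ** h) S = act2 g (act2 h S)"
proof -
  have "act2_slot1 g (act2_slot2 h X) = act2_slot2 h (act2_slot1 g X)" for g h X
    unfolding act2_slot1_def act2_slot2_def by (intro ext, rule sum_mult_sum_commute)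
  moreover have "act2_slot1 (g ** h) X = act2_slot1 g (act2_slot1 h X)"
    "act2_slot2 (g ** h) X = act2_slot2 g (act2_slot2 h X)" for X
    unfolding act2_slot1_def act2_slot2_def by (simp_all add: sum_matrix_mult)
  ultimately show ?thesis unfolding act2_eq_slots by simp
qed

lemma act2_one: "act2 (mat 1) S = S"
  unfolding act2_eq_slots act2_slot1_def act2_slot2_def by (simp add: sum_mat1)

lemma act2_transpose_cancel:
  assumes "orthogonal_matrix g"
  shows "act2 (transpose g) (act2 g S) = S" "act2 g (act2 (transpose g) S) = S"
  using assms by (simp_all add: act2_mult[symmetric] orthogonal_matrix_def act2_one)

lemma act2_scalar_identity:
  assumes "orthogonal_matrix g"
  shows "act2 g (\<lambda>i j. if i = j then c else 0) = (\<lambda>i j. if i = j then c else 0)"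
proof -
  have "act2 g (\<lambda>i j. if i = j then c else 0) i j = c * (\<Sum>a\<in>UNIV. g$i$a * g$j$a)" for i j
    by (simp add: act2_def sum_distrib_left mult_ac if_distrib[of "\<lambda>x. _ * x"] cong: if_cong)
  then show ?thesis by (simp add: orthogonal_matrix_rows_inner[OF assms] fun_eq_iff)
qed

lemma H4_sym:
  assumes "T \<in> H4"
  shows "T a b c d = T b a c d" "T a b c d = T a c b d" "T a b c d = T a b d c"
  using assms unfolding H4_def by auto

lemma H4_trace: "T \<in> H4 \<Longrightarrow> (\<Sum>i\<in>UNIV. T i i k l) = 0"
  unfolding H4_def by auto

lemma act4_swap12: "act4 g T j i k l = act4 g (\<lambda>a b c d. T b a c d) i j k l"
  unfolding act4_def by (subst sum.swap) (simp add: mult_ac)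

lemma act4_swap23: "act4 g T i k j l = act4 g (\<lambda>a b c d. T a c b d) i j k l"
  unfolding act4_def by (rule sum.cong[OF refl], subst sum.swap) (simp add: mult_ac)

lemma act4_swap34: "act4 g T i j l k = act4 g (\<lambda>a b c d. T a b d c) i j k l"
  unfolding act4_def by (rule sum.cong[OF refl], rule sum.cong[OF refl], subst sum.swap) (simp add: mult_ac)

lemma sum_mult_sum_factor:
  fixes W :: "'i \<Rightarrow> 'j \<Rightarrow> 'a::comm_semiring_0"
  shows "(\<Sum>a\<in>A. \<Sum>c\<in>C. f c * W a c) = (\<Sum>c\<in>C. f c * (\<Sum>a\<in>A. W a c))"
  by (subst sum.swap) (simp add: sum_distrib_left)

lemma act4_trace:
  assumes "orthogonal_matrix g"
  shows "(\<Sum>i\<in>UNIV. act4 g T i i k l)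
       = (\<Sum>c\<in>UNIV. g$k$c * (\<Sum>d\<in>UNIV. g$l$d * (\<Sum>a\<in>UNIV. T a a c d)))"
proof -
  define Y where "Y = act_slot3 g (act_slot4 g T)"
  have "(\<Sum>i\<in>UNIV. act4 g T i i k l) = (\<Sum>i\<in>UNIV. \<Sum>a\<in>UNIV. g$i$a * (\<Sum>b\<in>UNIV. g$i$b * Y a b k l))"
    by (simp add: act4_eq_slots act_slot1_def act_slot2_def Y_def)
  also have "\<dots> = (\<Sum>a\<in>UNIV. Y a a k l)"
    by (rule orthogonal_matrix_trace_sums[OF assms])
  also have "\<dots> = (\<Sum>a\<in>UNIV. \<Sum>c\<in>UNIV. g$k$c * (\<Sum>d\<in>UNIV. g$l$d * T a a c d))"
    by (simp add: Y_def act_slot3_def act_slot4_def)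
  also have "\<dots> = (\<Sum>c\<in>UNIV. g$k$c * (\<Sum>d\<in>UNIV. g$l$d * (\<Sum>a\<in>UNIV. T a a c d)))"
    by (simp only: sum_mult_sum_factor)
  finally show ?thesis .
qed

lemma act4_H4:
  assumes "orthogonal_matrix g" and T: "T \<in> H4"
  shows "act4 g T \<in> H4"
proof -
  have "(\<lambda>a b c d. T b a c d) = T" "(\<lambda>a b c d. T a c b d) = T" "(\<lambda>a b c d. T a b d c) = T"
    by (simp_all add: fun_eq_iff H4_sym[OF T])
  then have "act4 g T i j k l = act4 g T j i k l" "act4 g T i j k l = act4 g T i k j l"
    "act4 g T i j k l = act4 g T i j l k" for i j k l
    by (simp only: act4_swap12[of g T i j k l], simp only: act4_swap23[of g T i j k l],
        simp only: act4_swap34[of g T i j k l])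
  moreover have "(\<Sum>i\<in>UNIV. act4 g T i i k l) = 0" for k l
    by (simp add: act4_trace[OF assms(1)] H4_trace[OF T])
  ultimately show ?thesis unfolding H4_def by blast
qed

lemma conj_transpose_cancel:
  assumes "orthogonal_matrix q"
  shows "q ** (transpose q ** g ** q) ** transpose q = g"
    and "transpose q ** (q ** g ** transpose q) ** q = g"
proof -
  have "q ** (transpose q ** g ** q) ** transpose q = (q ** transpose q) ** g ** (q ** transpose q)"
    "transpose q ** (q ** g ** transpose q) ** q = (transpose q ** q) ** g ** (transpose q ** q)"
    by (simp_all add: matrix_mul_assoc)
  then show "q ** (transpose q ** g ** q) ** transpose q = g"
    and "transpose q ** (q ** g ** transpose q) ** q = g"
    using assms by (simp_all add: orthogonal_matrix_def)
qed

lemma symgroup4_act: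
  assumes q: "q \<in> SO3"
  shows "symgroup4 (act4 q T) = (\<lambda>h. q ** h ** matrix_inv q) ` symgroup4 T"
proof -
  have o: "orthogonal_matrix q" using q by (rule SO3_orthogonal)
  have act_conj: "act4 (q ** h ** transpose q) (act4 q T) = act4 q (act4 h T)" for h
    by (simp add: act4_mult act4_transpose_cancel[OF o])
  have "q ** h ** transpose q \<in> symgroup4 (act4 q T) \<longleftrightarrow> h \<in> symgroup4 T" for h
  proof -
    have "h \<in> SO3 \<longleftrightarrow> q ** h ** transpose q \<in> SO3"
      using conj_transpose_cancel(2)[OF o, of h] q by (metis SO3_mult SO3_transpose)
    moreover have "act4 q (act4 h T) = act4 q T \<longleftrightarrow> act4 h T = T"
      by (metis act4_transpose_cancel(1)[OF o])
    ultimately show ?thesis by (simp add: symgroup4_def act_conj)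
  qed
  then show ?thesis
    unfolding matrix_inv_orthogonal[OF o]
    by (auto simp: image_iff) (metis conj_transpose_cancel(1)[OF o])
qed

section \<open>The covariant d2\<close>

definition d2_gram :: "tensor4 \<Rightarrow> tensor2" where
  "d2_gram T = (\<lambda>i j. \<Sum>k\<in>UNIV. \<Sum>m\<in>UNIV. \<Sum>n\<in>UNIV. T i k m n * T j k m n)"

lemma d2_eq_gram: "T \<in> H4 \<Longrightarrow> d2 T = d2_gram T"
  unfolding d2_def d2_gram_def by (simp add: H4_sym)

lemma sum_move_two_outward:
  "(\<Sum>k\<in>A. \<Sum>m\<in>B. \<Sum>n\<in>C. \<Sum>a\<in>D. \<Sum>b\<in>E. F k m n a b)
 = (\<Sum>a\<in>D. \<Sum>b\<in>E. \<Sum>k\<in>A. \<Sum>m\<in>B. \<Sum>n\<in>C. F k m n a b)"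
proof -
  have "(\<Sum>k\<in>A. \<Sum>m\<in>B. \<Sum>n\<in>C. \<Sum>a\<in>D. \<Sum>b\<in>E. F k m n a b)
      = (\<Sum>k\<in>A. \<Sum>m\<in>B. \<Sum>a\<in>D. \<Sum>b\<in>E. \<Sum>n\<in>C. F k m n a b)"
    by (rule sum.cong[OF refl], rule sum.cong[OF refl], rule sum_rotate3)
  also have "\<dots> = (\<Sum>k\<in>A. \<Sum>a\<in>D. \<Sum>b\<in>E. \<Sum>m\<in>B. \<Sum>n\<in>C. F k m n a b)"
    by (rule sum.cong[OF refl], rule sum_rotate3)
  also have "\<dots> = (\<Sum>a\<in>D. \<Sum>b\<in>E. \<Sum>k\<in>A. \<Sum>m\<in>B. \<Sum>n\<in>C. F k m n a b)"
    by (rule sum_rotate3)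
  finally show ?thesis .
qed

lemma d2_gram_slot4: "orthogonal_matrix g \<Longrightarrow> d2_gram (act_slot4 g X) = d2_gram X"
  unfolding d2_gram_def act_slot4_def by (simp add: orthogonal_matrix_inner_sums)

lemma d2_gram_slot3:
  assumes "orthogonal_matrix g"
  shows "d2_gram (act_slot3 g X) = d2_gram X"
proof -
  have "(\<Sum>m\<in>UNIV. \<Sum>n\<in>UNIV. (\<Sum>c\<in>UNIV. g$m$c * X i k c n) * (\<Sum>c\<in>UNIV. g$m$c * X j k c n))
      = (\<Sum>m\<in>UNIV. \<Sum>n\<in>UNIV. X i k m n * X j k m n)" for i j k
    by (subst (1 2) sum.swap) (simp add: orthogonal_matrix_inner_sums[OF assms])
  then show ?thesis unfolding d2_gram_def act_slot3_def by simp
qed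

lemma d2_gram_slot2:
  assumes "orthogonal_matrix g"
  shows "d2_gram (act_slot2 g X) = d2_gram X"
proof -
  have "(\<Sum>k\<in>UNIV. \<Sum>m\<in>UNIV. \<Sum>n\<in>UNIV. (\<Sum>c\<in>UNIV. g$k$c * X i c m n) * (\<Sum>c\<in>UNIV. g$k$c * X j c m n))
      = (\<Sum>k\<in>UNIV. \<Sum>m\<in>UNIV. \<Sum>n\<in>UNIV. X i k m n * X j k m n)" for i j
    by (subst (1 2) sum_rotate3) (simp add: orthogonal_matrix_inner_sums[OF assms])
  then show ?thesis unfolding d2_gram_def act_slot2_def by simp
qed

lemma d2_gram_slot1: "d2_gram (act_slot1 g X) = act2 g (d2_gram X)"
proof (intro ext)
  fix i j
  have "d2_gram (act_slot1 g X) i j = (\<Sum>k\<in>UNIV. \<Sum>m\<in>UNIV. \<Sum>n\<in>UNIV. \<Sum>b\<in>UNIV. \<Sum>a\<in>UNIV.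
           g$i$a * (g$j$b * (X a k m n * X b k m n)))"
    by (simp add: d2_gram_def act_slot1_def sum_distrib_left sum_distrib_right mult_ac)
  also have "\<dots> = (\<Sum>a\<in>UNIV. \<Sum>b\<in>UNIV. \<Sum>k\<in>UNIV. \<Sum>m\<in>UNIV. \<Sum>n\<in>UNIV.
           g$i$a * (g$j$b * (X a k m n * X b k m n)))"
    by (subst sum_move_two_outward) (rule sum.swap)
  also have "\<dots> = act2 g (d2_gram X) i j"
    by (simp add: act2_def d2_gram_def sum_distrib_left mult.assoc)
  finally show "d2_gram (act_slot1 g X) i j = act2 g (d2_gram X) i j" .
qed

lemma d2_act4:
  assumes "orthogonal_matrix g" "T \<in> H4"
  shows "d2 (act4 g T) = act2 g (d2 T)"
proof -
  have "d2 (act4 g T) = d2_gram (act4 g T)" using assms by (simp add: d2_eq_gram act4_H4)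
  then show ?thesis using assms
    by (simp add: d2_eq_gram act4_eq_slots d2_gram_slot1 d2_gram_slot2 d2_gram_slot3 d2_gram_slot4)
qed

lemma polyfun_sum:
  "finite A \<Longrightarrow> (\<And>x. x \<in> A \<Longrightarrow> polyfun (f x)) \<Longrightarrow> polyfun (\<lambda>T. \<Sum>x\<in>A. f x T)"
proof (induction A rule: finite_induct)
  case empty
  then show ?case using pf_const[of 0] by simp
next
  case (insert a A)
  then show ?case by (simp add: pf_add)
qed

lemma equiv_poly_map2_d2: "equiv_poly_map2 d2"
  unfolding equiv_poly_map2_def
proof (intro conjI allI ballI)
  fix i j
  show "polyfun (\<lambda>T. d2 T i j)"
    unfolding d2_def by (intro polyfun_sum finite pf_mult pf_coord)
next
  fix T assume "T \<in> H4"
  then show "d2 T \<in> Sym2" by (simp add: Sym2_def d2_eq_gram d2_gram_def mult.commute)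
next
  fix g T assume "g \<in> SO3" "T \<in> H4"
  then show "d2 (act4 g T) = act2 g (d2 T)" by (simp add: d2_act4 SO3_orthogonal)
qed

lemma d2_in_Cov2: "d2 H \<in> Cov2 H"
  using equiv_poly_map2_d2 by (auto simp: Cov2_def)

lemma d2_eq_0_iff:
  assumes "H \<in> H4"
  shows "d2 H = (\<lambda>i j. 0) \<longleftrightarrow> H = (\<lambda>i j k l. 0)"
proof
  assume "d2 H = (\<lambda>i j. 0)"
  then have "(\<Sum>k\<in>UNIV. \<Sum>m\<in>UNIV. \<Sum>n\<in>UNIV. (H i k m n)^2) = 0" for i
    using assms by (simp add: d2_eq_gram d2_gram_def fun_eq_iff power2_eq_square)
  then have "H i k m n = 0" for i k m n
    by (simp add: sum_nonneg_eq_0_iff sum_nonneg)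
  then show "H = (\<lambda>i j k l. 0)" by (simp add: fun_eq_iff)
qed (simp add: d2_def)

section \<open>The cube group and the cubic tensor\<close>

definition sign_entries :: "mat3 \<Rightarrow> bool" where
  "sign_entries g \<longleftrightarrow> (\<forall>i j. g$i$j = -1 \<or> g$i$j = 0 \<or> g$i$j = 1)"

lemma sum_nonneg_terms_eq_0:
  fixes f :: "'i::finite \<Rightarrow> real"
  assumes "\<And>i. 0 \<le> f i" "(\<Sum>i\<in>UNIV. f i) \<le> 0"
  shows "f i = 0"
  using assms sum_nonneg_eq_0_iff[of UNIV f] by (metis UNIV_I antisym sum_nonneg finite)

lemma sign_of_abs_sum_le_1:
  fixes v :: "'i::finite \<Rightarrow> real"
  assumes abs_sum: "(\<Sum>i\<in>UNIV. \<bar>v i\<bar>) \<le> 1" and sq_sum: "(\<Sum>i\<in>UNIV. (v i)^2) = 1"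
  shows "v i = -1 \<or> v i = 0 \<or> v i = 1"
proof -
  have "\<bar>v j\<bar> \<le> 1" for j
    using member_le_sum[of j UNIV "\<lambda>i. \<bar>v i\<bar>"] abs_sum by simp
  then have "0 \<le> \<bar>v j\<bar> - (v j)^2" for j
    using mult_left_mono[of "\<bar>v j\<bar>" 1 "\<bar>v j\<bar>"] by (simp add: power2_eq_square)
  moreover have "(\<Sum>j\<in>UNIV. \<bar>v j\<bar> - (v j)^2) \<le> 0"
    using abs_sum sq_sum by (simp add: sum_subtractf)
  ultimately have "\<bar>v i\<bar> - (v i)^2 = 0"
    using sum_nonneg_terms_eq_0[of "\<lambda>j. \<bar>v j\<bar> - (v j)^2"] by blast
  moreover have "\<bar>v i\<bar> * (\<bar>v i\<bar> - 1) = -(\<bar>v i\<bar> - (v i)^2)"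
    by (simp add: algebra_simps power2_eq_square abs_mult_self_eq)
  ultimately show ?thesis by auto
qed

lemma sign_of_sum_fourth_powers:
  fixes v :: "'i::finite \<Rightarrow> real"
  assumes sq_sum: "(\<Sum>i\<in>UNIV. (v i)^2) = 1" and fourth_sum: "(\<Sum>i\<in>UNIV. (v i)^4) = 1"
  shows "v i = -1 \<or> v i = 0 \<or> v i = 1"
proof -
  have "(v j)^2 \<le> 1" for j
    using member_le_sum[of j UNIV "\<lambda>i. (v i)^2"] sq_sum by simp
  then have "0 \<le> (v j)^2 - (v j)^4" for j
    using mult_left_mono[of "(v j)^2" 1 "(v j)^2"] by (simp add: power4_eq_xxxx power2_eq_square)
  moreover have "(\<Sum>j\<in>UNIV. (v j)^2 - (v j)^4) \<le> 0"
    using sq_sum fourth_sum by (simp add: sum_subtractf)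
  ultimately have "(v i)^2 * ((v i)^2 - 1) = 0"
    using sum_nonneg_terms_eq_0[of "\<lambda>j. (v j)^2 - (v j)^4"]
    by (simp add: power4_eq_xxxx power2_eq_square algebra_simps)
  then show ?thesis by (auto simp: power2_eq_1_iff)
qed

lemma orthogonal_matrix_row_sum_sq:
  "orthogonal_matrix (g::real^'n^'n) \<Longrightarrow> (\<Sum>j\<in>UNIV. (g$i$j)^2) = 1"
  using orthogonal_matrix_rows_inner[of g i i] by (simp add: power2_eq_square)

lemma orthogonal_matrix_col_sum_sq:
  "orthogonal_matrix (g::real^'n^'n) \<Longrightarrow> (\<Sum>i\<in>UNIV. (g$i$j)^2) = 1"
  using orthogonal_matrix_columns_inner[of g j j] by (simp add: power2_eq_square)

lemma Octa_sign_entries: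
  assumes "g \<in> Octa"
  shows "sign_entries g"
proof -
  have g: "g \<in> SO3" and img: "(\<lambda>x. g *v x) ` cube = cube" using assms by (auto simp: Octa_def)
  have "(\<Sum>j\<in>UNIV. \<bar>g$i$j\<bar>) \<le> 1" for i
  proof -
    define x :: "real^3" where "x = (\<chi> j. sgn (g$i$j))"
    have "x \<in> cube" by (simp add: x_def cube_def abs_sgn_eq)
    then have "\<bar>(g *v x)$i\<bar> \<le> 1" using img by (auto simp: cube_def)
    moreover have "(g *v x)$i = (\<Sum>j\<in>UNIV. \<bar>g$i$j\<bar>)"
      by (simp add: matrix_vector_mult_def x_def abs_sgn)
    ultimately show ?thesis by simp
  qed
  then show ?thesis
    using sign_of_abs_sum_le_1[of "\<lambda>j. g$_$j"] orthogonal_matrix_row_sum_sq[OF SO3_orthogonal[OF g]]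
    unfolding sign_entries_def by blast
qed

lemma sign_entries_abs: "sign_entries g \<Longrightarrow> \<bar>g$i$j\<bar> = (g$i$j)^2"
  unfolding sign_entries_def by (metis abs_0 abs_1 abs_minus one_power2 power2_minus zero_power2)

lemma sign_entries_cube_subset:
  assumes "g \<in> SO3" "sign_entries g" "x \<in> cube"
  shows "g *v x \<in> cube"
proof -
  have "\<bar>(g *v x)$i\<bar> \<le> 1" for i
  proof -
    have "\<bar>(g *v x)$i\<bar> \<le> (\<Sum>j\<in>UNIV. \<bar>g$i$j\<bar> * \<bar>x$j\<bar>)"
      unfolding abs_mult[symmetric] by (simp add: matrix_vector_mult_def sum_abs)
    also have "\<dots> \<le> (\<Sum>j\<in>UNIV. \<bar>g$i$j\<bar>)"
      using assms(3) by (intro sum_mono mult_left_le) (auto simp: cube_def)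
    also have "\<dots> = 1"
      using orthogonal_matrix_row_sum_sq[OF SO3_orthogonal[OF assms(1)]]
      by (simp add: sign_entries_abs[OF assms(2)])
    finally show ?thesis .
  qed
  then show ?thesis by (simp add: cube_def)
qed

lemma Octa_iff: "g \<in> Octa \<longleftrightarrow> g \<in> SO3 \<and> sign_entries g"
proof (intro iffI conjI)
  assume "g \<in> SO3 \<and> sign_entries g"
  then have g: "g \<in> SO3" "sign_entries g" by auto
  have "cube \<subseteq> (\<lambda>x. g *v x) ` cube"
  proof
    fix x assume "x \<in> cube"
    then have "transpose g *v x \<in> cube"
      using g by (intro sign_entries_cube_subset SO3_transpose) (auto simp: sign_entries_def transpose_def)
    moreover have "g *v (transpose g *v x) = x"
      using SO3_orthogonal[OF g(1)]
      by (simp only: matrix_vector_mul_assoc orthogonal_matrix_def matrix_vector_mul_lid)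
    ultimately show "x \<in> (\<lambda>x. g *v x) ` cube" by (metis image_eqI)
  qed
  then show "g \<in> Octa"
    using g sign_entries_cube_subset by (auto simp: Octa_def)
qed (auto simp: Octa_def Octa_sign_entries)

lemma Octa_SO3: "g \<in> Octa \<Longrightarrow> g \<in> SO3"
  by (simp add: Octa_def)

lemma Octa_half_turns_and_three_cycle:
  "vector [vector [1,0,0], vector [0,-1,0], vector [0,0,-1]] \<in> Octa"
  "vector [vector [-1,0,0], vector [0,1,0], vector [0,0,-1]] \<in> Octa"
  "vector [vector [0,1,0], vector [0,0,1], vector [1,0,0]] \<in> Octa"
  unfolding Octa_iff sign_entries_def SO3_def orthogonal_matrix_def
  by (simp_all add: matrix_matrix_mult_def transpose_def mat_def vec_eq_iff forall_3 sum_3 det_3)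

lemma Octa_fixed_scalar:
  assumes "\<And>q. q \<in> Octa \<Longrightarrow> act2 q S = S"
  shows "S = (\<lambda>i j. if i = j then S 1 1 else 0)"
proof -
  note fix1 = fun_cong[OF fun_cong[OF assms[OF Octa_half_turns_and_three_cycle(1)]]]
   and fix2 = fun_cong[OF fun_cong[OF assms[OF Octa_half_turns_and_three_cycle(2)]]]
   and fix3 = fun_cong[OF fun_cong[OF assms[OF Octa_half_turns_and_three_cycle(3)]]]
  have "S 1 2 = 0" "S 2 1 = 0" "S 1 3 = 0" "S 3 1 = 0"
    using fix1[of 1 2] fix1[of 2 1] fix1[of 1 3] fix1[of 3 1] by (simp_all add: act2_def sum_3)
  moreover have "S 2 3 = 0" "S 3 2 = 0"
    using fix2[of 2 3] fix2[of 3 2] by (simp_all add: act2_def sum_3)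
  moreover have "S 1 1 = S 2 2" "S 2 2 = S 3 3"
    using fix3[of 1 1] fix3[of 2 2] by (simp_all add: act2_def sum_3)
  ultimately show ?thesis by (simp add: fun_eq_iff forall_3)
qed

definition cubic_tensor :: tensor4 where
  "cubic_tensor = (\<lambda>i j k l. (if i = j \<and> j = k \<and> k = l then 1 else 0)
     - ((if i = j \<and> k = l then 1 else 0) + (if i = k \<and> j = l then 1 else 0)
        + (if i = l \<and> j = k then 1 else 0)) / 5)"

lemma act4_cubic_tensor:
  "act4 g cubic_tensor i j k l =
     (\<Sum>a\<in>UNIV. g$i$a * g$j$a * g$k$a * g$l$a)
     - ((\<Sum>a\<in>UNIV. g$i$a * g$j$a) * (\<Sum>a\<in>UNIV. g$k$a * g$l$a)
      + (\<Sum>a\<in>UNIV. g$i$a * g$k$a) * (\<Sum>a\<in>UNIV. g$j$a * g$l$a)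
      + (\<Sum>a\<in>UNIV. g$i$a * g$l$a) * (\<Sum>a\<in>UNIV. g$j$a * g$k$a)) / 5"
  unfolding act4_def cubic_tensor_def by (simp add: sum_3 field_simps)

lemma sign_entries_column_disjoint:
  assumes "orthogonal_matrix g" "sign_entries g" "i \<noteq> j"
  shows "g$i$a * g$j$a = 0"
proof (rule ccontr)
  assume nz: "g$i$a * g$j$a \<noteq> 0"
  have "(g$r$a)^2 = 1" if "g$r$a \<noteq> 0" for r
  proof -
    have "g$r$a = -1 \<or> g$r$a = 0 \<or> g$r$a = 1" using assms(2) by (simp add: sign_entries_def)
    then show ?thesis using that by auto
  qed
  then have "(g$i$a)^2 = 1" "(g$j$a)^2 = 1" using nz by auto
  moreover have "(\<Sum>k\<in>{i,j}. (g$k$a)^2) \<le> (\<Sum>k\<in>UNIV. (g$k$a)^2)"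
    by (intro sum_mono2) auto
  ultimately show False
    using assms(3) orthogonal_matrix_columns_inner[OF assms(1), of a a] by (simp add: power2_eq_square)
qed

lemma sign_entries_sum_row_product4:
  assumes "orthogonal_matrix g" "sign_entries g"
  shows "(\<Sum>a\<in>UNIV. g$i$a * g$j$a * g$k$a * g$l$a) = (if i = j \<and> j = k \<and> k = l then 1 else 0)"
proof (cases "i = j \<and> j = k \<and> k = l")
  case True
  have fourth: "g$i$a * g$i$a * g$i$a * g$i$a = g$i$a * g$i$a" for a
  proof -
    have "g$i$a = -1 \<or> g$i$a = 0 \<or> g$i$a = 1" using assms(2) by (simp add: sign_entries_def)
    then show ?thesis by auto
  qed
  from True have "j = i" "k = i" "l = i" by auto
  then have "(\<Sum>a\<in>UNIV. g$i$a * g$j$a * g$k$a * g$l$a) = (\<Sum>a\<in>UNIV. g$i$a * g$i$a)"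
    by (simp only: fourth)
  then show ?thesis
    using True orthogonal_matrix_rows_inner[OF assms(1), of i i] by simp
next
  case False
  then have "g$i$a * g$j$a * g$k$a * g$l$a = 0" for a
    using sign_entries_column_disjoint[OF assms, of i j a] sign_entries_column_disjoint[OF assms, of j k a]
      sign_entries_column_disjoint[OF assms, of k l a]
    by (auto simp: mult.assoc)
  then have "(\<Sum>a\<in>UNIV. g$i$a * g$j$a * g$k$a * g$l$a) = 0"
    by (intro sum.neutral) blast
  then show ?thesis using False by simp
qed

lemma act4_cubic_tensor_sign_entries:
  assumes "orthogonal_matrix g" "sign_entries g"
  shows "act4 g cubic_tensor = cubic_tensor"
proof -
  have delta_mult: "(if P then 1 else 0) * (if Q then 1 else 0) = (if P \<and> Q then (1::real) else 0)" for P Q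
    by simp
  show ?thesis
    unfolding fun_eq_iff act4_cubic_tensor sign_entries_sum_row_product4[OF assms]
      orthogonal_matrix_rows_inner[OF assms(1)] delta_mult
    unfolding cubic_tensor_def by simp
qed

lemma sign_entries_of_act4_cubic_tensor:
  assumes "orthogonal_matrix g" "act4 g cubic_tensor = cubic_tensor"
  shows "sign_entries g"
proof -
  have fixed: "act4 (transpose g) cubic_tensor = cubic_tensor"
    using assms act4_transpose_cancel(1)[OF assms(1), of cubic_tensor] by simp
  have "(\<Sum>c\<in>UNIV. (g$c$j)^4) = 1" for j
  proof -
    have "act4 (transpose g) cubic_tensor j j j j = cubic_tensor j j j j" using fixed by simp
    then have "(\<Sum>c\<in>UNIV. (g$c$j)^4) - 3 * (\<Sum>c\<in>UNIV. (g$c$j)^2)^2 / 5 = 2/5"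
      unfolding act4_cubic_tensor
      by (simp add: transpose_def cubic_tensor_def power2_eq_square power4_eq_xxxx)
    then show ?thesis using orthogonal_matrix_col_sum_sq[OF assms(1), of j] by simp
  qed
  then show ?thesis
    using sign_of_sum_fourth_powers[of "\<lambda>c. g$c$_"] orthogonal_matrix_col_sum_sq[OF assms(1)]
    unfolding sign_entries_def by blast
qed

lemma symgroup4_cubic_tensor: "symgroup4 cubic_tensor = Octa"
proof (intro set_eqI)
  fix g
  show "g \<in> symgroup4 cubic_tensor \<longleftrightarrow> g \<in> Octa"
    unfolding symgroup4_def Octa_iff mem_Collect_eq
    using act4_cubic_tensor_sign_entries sign_entries_of_act4_cubic_tensor SO3_orthogonal by blast
qed

lemma act4_scale: "act4 g (\<lambda>i j k l. c * T i j k l) = (\<lambda>i j k l. c * act4 g T i j k l)"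
  unfolding act4_def by (simp add: sum_distrib_left mult_ac)

lemma symgroup4_scale:
  assumes "c \<noteq> 0"
  shows "symgroup4 (\<lambda>i j k l. c * T i j k l) = symgroup4 T"
proof -
  have "act4 g (\<lambda>i j k l. c * T i j k l) = (\<lambda>i j k l. c * T i j k l) \<longleftrightarrow> act4 g T = T" for g
    using assms by (simp add: act4_scale fun_eq_iff)
  then show ?thesis by (simp add: symgroup4_def)
qed

section \<open>An extremal frame for the quartic form\<close>

definition quartic_form :: "tensor4 \<Rightarrow> real^3 \<Rightarrow> real" where
  "quartic_form T x = (\<Sum>a\<in>UNIV. \<Sum>b\<in>UNIV. \<Sum>c\<in>UNIV. \<Sum>d\<in>UNIV. T a b c d * x$a * x$b * x$c * x$d)"

lemma act4_1111_eq_quartic_form: "act4 M T 1 1 1 1 = quartic_form T (M$1)"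
  unfolding act4_def quartic_form_def by (simp add: mult_ac)

lemma quartic_form_act4: "quartic_form (act4 g T) y = quartic_form T (transpose g *v y)"
proof -
  have row1: "((\<chi> i. y) ** g :: mat3)$1 = transpose g *v y"
    by (simp add: vec_eq_iff matrix_matrix_mult_def matrix_vector_mult_def transpose_def mult.commute)
  have "quartic_form (act4 g T) y = act4 (\<chi> i. y) (act4 g T) 1 1 1 1" by (simp add: act4_1111_eq_quartic_form)
  also have "\<dots> = act4 ((\<chi> i. y) ** g) T 1 1 1 1" by (simp add: act4_mult)
  finally show ?thesis by (simp add: act4_1111_eq_quartic_form row1)
qed

lemma quartic_form_scaleR: "quartic_form T (c *\<^sub>R x) = c^4 * quartic_form T x"
  unfolding quartic_form_def by (simp add: sum_distrib_left mult_ac power4_eq_xxxx)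

lemma quartic_form_sq_le_of_max:
  fixes x n :: "real^3"
  assumes max: "\<And>u. norm u = 1 \<Longrightarrow> P u \<Longrightarrow> (quartic_form T u)^2 \<le> (quartic_form T n)^2"
    and P: "x \<noteq> 0 \<Longrightarrow> P (x /\<^sub>R norm x)"
  shows "(quartic_form T x)^2 \<le> (quartic_form T n)^2 * (x \<bullet> x)^4"
proof (cases "x = 0")
  case True
  then show ?thesis by (simp add: quartic_form_def)
next
  case False
  define r where "r = norm x"
  have "r > 0" using False by (simp add: r_def)
  then have "quartic_form T x = r^4 * quartic_form T (x /\<^sub>R r)"
    using quartic_form_scaleR[of T r "x /\<^sub>R r"] by simp
  then have "(quartic_form T x)^2 = (r^4)^2 * (quartic_form T (x /\<^sub>R r))^2"
    by (simp add: power_mult_distrib)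
  also have "\<dots> \<le> (r^4)^2 * (quartic_form T n)^2"
    using max[of "x /\<^sub>R r"] P False by (simp add: r_def)
  also have "(r^4)^2 = (x \<bullet> x)^4"
    by (simp add: r_def power2_norm_eq_inner[symmetric] power_mult[symmetric])
  finally show ?thesis by (simp add: mult.commute)
qed

lemma orthogonal_matrix_inner_self:
  fixes g :: "real^'n^'n"
  assumes "orthogonal_matrix g"
  shows "(g *v y) \<bullet> (g *v y) = y \<bullet> y"
proof -
  have "orthogonal_transformation ((*v) g)"
    using assms by (simp add: orthogonal_transformation_matrix matrix_of_matrix_vector_mul)
  then have "norm (g *v y) = norm y" by (rule orthogonal_transformation_norm)
  then show ?thesis by (simp add: power2_norm_eq_inner[symmetric])
qed

lemma rotation_of_orthonormal_pair:
  fixes n1 n2 :: "real^3"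
  assumes "norm n1 = 1" "norm n2 = 1" "n1 \<bullet> n2 = 0"
  shows "(vector [n2, cross3 n1 n2, n1] :: mat3) \<in> SO3"
proof -
  let ?g = "vector [n2, cross3 n1 n2, n1] :: mat3"
  have "(norm (cross3 n1 n2))^2 = 1"
    using norm_cross_dot[of n1 n2] assms by simp
  then have "norm (cross3 n1 n2) = 1"
    using norm_ge_zero[of "cross3 n1 n2"] by (simp add: power2_eq_1_iff)
  then have "orthogonal_matrix ?g"
    unfolding orthogonal_matrix_orthonormal_rows
    using assms by (simp add: forall_3 row_def vec_eq_iff dot_cross_self inner_commute orthogonal_def)
  moreover have "det ?g = (n1 \<bullet> n1) * (n2 \<bullet> n2) - (n1 \<bullet> n2)^2"
    by (simp add: det_3 cross3_def inner_vec_def sum_3 power2_eq_square algebra_simps)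
  ultimately show ?thesis
    using assms by (simp add: SO3_def power2_norm_eq_inner[symmetric])
qed

lemma quartic_form_maximisers:
  obtains n1 n2 :: "real^3" where "norm n1 = 1" "norm n2 = 1" "n1 \<bullet> n2 = 0"
    "\<And>u. norm u = 1 \<Longrightarrow> (quartic_form T u)^2 \<le> (quartic_form T n1)^2"
    "\<And>u. norm u = 1 \<Longrightarrow> n1 \<bullet> u = 0 \<Longrightarrow> (quartic_form T u)^2 \<le> (quartic_form T n2)^2"
proof -
  have cont: "continuous_on S (\<lambda>x. (quartic_form T x)^2)" for S
    unfolding quartic_form_def by (intro continuous_intros)
  have "axis 1 1 \<in> sphere (0::real^3) 1" by simp
  then have "sphere (0::real^3) 1 \<noteq> {}" by blast
  then obtain n1 :: "real^3" where n1: "n1 \<in> sphere 0 1"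
    "\<And>u. u \<in> sphere 0 1 \<Longrightarrow> (quartic_form T u)^2 \<le> (quartic_form T n1)^2"
    using continuous_attains_sup[OF compact_sphere _ cont] by metis
  define C where "C = sphere (0::real^3) 1 \<inter> {x. n1 \<bullet> x = 0}"
  obtain v :: "real^3" where "v \<noteq> 0" "orthogonal n1 v"
    using orthogonal_to_vector_exists[of n1] by auto
  then have "v /\<^sub>R norm v \<in> C" by (simp add: C_def orthogonal_def)
  then have "C \<noteq> {}" by blast
  moreover have "compact C"
    unfolding C_def by (intro compact_Int_closed compact_sphere closed_hyperplane)
  ultimately obtain n2 where n2: "n2 \<in> C"
    "\<And>u. u \<in> C \<Longrightarrow> (quartic_form T u)^2 \<le> (quartic_form T n2)^2"
    using continuous_attains_sup[OF _ _ cont] by metis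
  show ?thesis
  proof (rule that)
    show "norm n1 = 1" using n1(1) by simp
    show "norm n2 = 1" "n1 \<bullet> n2 = 0" using n2(1) by (simp_all add: C_def)
    show "(quartic_form T u)^2 \<le> (quartic_form T n1)^2" if "norm u = 1" for u
      using n1(2) that by simp
    show "(quartic_form T u)^2 \<le> (quartic_form T n2)^2" if "norm u = 1" "n1 \<bullet> u = 0" for u
      using n2(2) that by (simp add: C_def)
  qed
qed

lemma extremal_frame:
  obtains g where "g \<in> SO3"
    "\<And>y. (quartic_form (act4 g T) y)^2 \<le> (quartic_form (act4 g T) (vector [0,0,1]))^2 * (y \<bullet> y)^4"
    "\<And>y. y$3 = 0 \<Longrightarrow>
       (quartic_form (act4 g T) y)^2 \<le> (quartic_form (act4 g T) (vector [1,0,0]))^2 * (y \<bullet> y)^4"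
proof -
  obtain n1 n2 where n: "norm n1 = 1" "norm n2 = 1" "n1 \<bullet> n2 = 0"
    and max1: "\<And>u. norm u = 1 \<Longrightarrow> (quartic_form T u)^2 \<le> (quartic_form T n1)^2"
    and max2: "\<And>u. norm u = 1 \<Longrightarrow> n1 \<bullet> u = 0 \<Longrightarrow> (quartic_form T u)^2 \<le> (quartic_form T n2)^2"
    using quartic_form_maximisers[of T] by blast
  define g where "g = (vector [n2, cross3 n1 n2, n1] :: mat3)"
  have g: "g \<in> SO3" unfolding g_def by (rule rotation_of_orthonormal_pair[OF n])
  have tg: "transpose g *v y = y$1 *\<^sub>R n2 + y$2 *\<^sub>R cross3 n1 n2 + y$3 *\<^sub>R n1" for y
    by (simp add: g_def vec_eq_iff matrix_vector_mult_def transpose_def sum_3 mult.commute)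
  have inner_tg: "(transpose g *v y) \<bullet> (transpose g *v y) = y \<bullet> y" for y
    using SO3_orthogonal[OF SO3_transpose[OF g]] by (rule orthogonal_matrix_inner_self)
  have n1_tg: "n1 \<bullet> (transpose g *v y) = y$3" for y
    unfolding tg using n by (simp add: inner_add_right dot_cross_self power2_norm_eq_inner[symmetric])
  have e3: "transpose g *v vector [0,0,1] = n1" and e1: "transpose g *v vector [1,0,0] = n2"
    unfolding tg by simp_all
  show ?thesis
  proof (rule that[OF g])
    fix y :: "real^3"
    have "(quartic_form T (transpose g *v y))^2
        \<le> (quartic_form T n1)^2 * ((transpose g *v y) \<bullet> (transpose g *v y))^4"
      using max1 by (intro quartic_form_sq_le_of_max[where P = "\<lambda>_. True"]) auto
    then show "(quartic_form (act4 g T) y)^2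
        \<le> (quartic_form (act4 g T) (vector [0,0,1]))^2 * (y \<bullet> y)^4"
      unfolding quartic_form_act4 e3 inner_tg .
  next
    fix y :: "real^3"
    assume "y$3 = 0"
    then have "n1 \<bullet> (transpose g *v y) = 0" using n1_tg[of y] by simp
    then have "(quartic_form T (transpose g *v y))^2
        \<le> (quartic_form T n2)^2 * ((transpose g *v y) \<bullet> (transpose g *v y))^4"
      using max2 by (intro quartic_form_sq_le_of_max[where P = "\<lambda>u. n1 \<bullet> u = 0"]) auto
    then show "(quartic_form (act4 g T) y)^2
        \<le> (quartic_form (act4 g T) (vector [1,0,0]))^2 * (y \<bullet> y)^4"
      unfolding quartic_form_act4 e1 inner_tg .
  qed
qed

section \<open>Harmonic coordinates\<close>

text \<open>
  As simp rules the transpositions of H4_sym are permutative, so the simplifier applies them by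
  ordered rewriting and sorts the indices of every component; H4_trace33 then removes repeated
  indices 3. Together they rewrite each component of a harmonic tensor into one of the nine with at
  most one index 3.
\<close>

lemma H4_trace33:
  assumes "T \<in> H4"
  shows "T a b 3 3 = - T 1 1 a b - T 2 2 a b"
proof -
  have "T 3 3 a b = - T 1 1 a b - T 2 2 a b"
    using H4_trace[OF assms, of a b] by (simp add: sum_3)
  then show ?thesis by (metis H4_sym[OF assms])
qed

text \<open>
  The quartic form of the harmonic tensor K with K1111 = a1, K1112 = a2, K1122 = a3, K1222 = a4,
  K2222 = a5, K1113 = b1, K1123 = b2, K1223 = b3, K2223 = b4.
\<close>

definition harmonic_quartic ::
    "real \<Rightarrow> real \<Rightarrow> real \<Rightarrow> real \<Rightarrow> real \<Rightarrow> real \<Rightarrow> real \<Rightarrow> real \<Rightarrow> real \<Rightarrow> real \<Rightarrow> real \<Rightarrow> real \<Rightarrow> real"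
  where
  "harmonic_quartic a1 a2 a3 a4 a5 b1 b2 b3 b4 x y z =
     a1*x^4 + 4*a2*x^3*y + 6*a3*x^2*y^2 + 4*a4*x*y^3 + a5*y^4
   + 4*b1*x^3*z + 12*b2*x^2*y*z + 12*b3*x*y^2*z + 4*b4*y^3*z
   - 6*(a1+a3)*x^2*z^2 - 12*(a2+a4)*x*y*z^2 - 6*(a3+a5)*y^2*z^2
   - 4*(b1+b3)*x*z^3 - 4*(b2+b4)*y*z^3 + (a1+2*a3+a5)*z^4"

lemma quartic_form_H4:
  assumes "K \<in> H4"
  shows "quartic_form K x = harmonic_quartic (K 1 1 1 1) (K 1 1 1 2) (K 1 1 2 2) (K 1 2 2 2) (K 2 2 2 2)
                           (K 1 1 1 3) (K 1 1 2 3) (K 1 2 2 3) (K 2 2 2 3) (x$1) (x$2) (x$3)"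
  unfolding quartic_form_def harmonic_quartic_def
  by (simp add: sum_3 H4_sym[OF assms] H4_trace33[OF assms] power2_eq_square power3_eq_cube
      power4_eq_xxxx algebra_simps)

lemma d2_H4:
  assumes "K \<in> H4"
  defines "a1 \<equiv> K 1 1 1 1" and "a2 \<equiv> K 1 1 1 2" and "a3 \<equiv> K 1 1 2 2" and "a4 \<equiv> K 1 2 2 2"
    and "a5 \<equiv> K 2 2 2 2" and "b1 \<equiv> K 1 1 1 3" and "b2 \<equiv> K 1 1 2 3" and "b3 \<equiv> K 1 2 2 3"
    and "b4 \<equiv> K 2 2 2 3"
  shows "d2 K 1 2 = 4*a1*a2 + 3*a1*a4 + 9*a2*a3 + 3*a2*a5 + 9*a3*a4 + 4*a4*a5 + 4*b1*b2 + b1*b4 + 7*b2*b3 + 4*b3*b4"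
    and "d2 K 1 3 = 2*a1*b3 + 3*a2*b4 - 2*a3*b1 + a3*b3 - 3*a4*b2 + 4*a4*b4 - a5*b1 - 4*a5*b3"
    and "d2 K 2 3 = -4*a1*b2 - a1*b4 + 4*a2*b1 - 3*a2*b3 + a3*b2 - 2*a3*b4 + 3*a4*b1 + 2*a5*b2"
    and "d2 K 1 1 - d2 K 2 2 = 4*a1^2 + 6*a1*a3 + 2*a2^2 - 6*a3*a5 - 2*a4^2 - 4*a5^2
                             + 4*b1^2 + 2*b1*b3 + 2*b2^2 - 2*b2*b4 - 2*b3^2 - 4*b4^2"
    and "d2 K 1 1 - d2 K 3 3 = -4*a1*a3 - 2*a1*a5 - 6*a2*a4 - 4*a3^2 - 10*a3*a5 - 2*a4^2 - 4*a5^2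
                             - 4*b1*b3 - 6*b2*b4 - 2*b3^2 - 4*b4^2"
  unfolding d2_def assms(2-10)
  by (simp_all add: sum_3 H4_sym[OF assms(1)] H4_trace33[OF assms(1)] algebra_simps power2_eq_square)

section \<open>Extremal harmonic quartics with isotropic d2\<close>

lemma max_at_zero_imp_critical:
  fixes c0 c1 c2 c3 c4 :: real
  assumes "\<And>t. (c0 + c1*t + c2*t^2 + c3*t^3 + c4*t^4)^2 \<le> c0^2 * (1 + t^2)^4"
  shows "c0 * c1 = 0"
proof -
  define f where "f t = c0^2 * (1 + t^2)^4 - (c0 + c1*t + c2*t^2 + c3*t^3 + c4*t^4)^2" for t :: real
  have min: "\<forall>y. \<bar>0 - y\<bar> < 1 \<longrightarrow> f 0 \<le> f y" using assms by (simp add: f_def)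
  have "DERIV f 0 :> -(2*c0*c1)"
    unfolding f_def by (auto intro!: derivative_eq_intros)
  from DERIV_local_min[OF this _ min] show ?thesis by simp
qed

lemma abs_add_abs_le_of_sq_le:
  fixes u v c :: real
  assumes "(u + v)^2 \<le> c^2" "(u - v)^2 \<le> c^2"
  shows "\<bar>u\<bar> + \<bar>v\<bar> \<le> \<bar>c\<bar>"
proof -
  have "\<bar>u + v\<bar> \<le> \<bar>c\<bar>" "\<bar>u - v\<bar> \<le> \<bar>c\<bar>" using assms by (simp_all add: abs_le_square_iff)
  then show ?thesis by linarith
qed

text \<open>
  Harmonic coordinates of a tensor whose quartic form f is maximal in absolute value at e3 on the
  unit sphere and at e1 on the equator (f e3 = a1 + 2 a3 + a5, f e1 = a1), and whose d2 is
  isotropic (compare d2_H4).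
\<close>

locale extremal_harmonic_quartic =
  fixes a1 a2 a3 a4 a5 b1 b2 b3 b4 :: real
  assumes max_sphere: "\<And>x y z. (harmonic_quartic a1 a2 a3 a4 a5 b1 b2 b3 b4 x y z)^2
                                    \<le> (a1 + 2*a3 + a5)^2 * (x^2 + y^2 + z^2)^4"
    and max_circle: "\<And>x y. (harmonic_quartic a1 a2 a3 a4 a5 b1 b2 b3 b4 x y 0)^2 \<le> a1^2 * (x^2 + y^2)^4"
    and d2_12: "4*a1*a2 + 3*a1*a4 + 9*a2*a3 + 3*a2*a5 + 9*a3*a4 + 4*a4*a5 + 4*b1*b2 + b1*b4
                + 7*b2*b3 + 4*b3*b4 = 0"
    and d2_13: "2*a1*b3 + 3*a2*b4 - 2*a3*b1 + a3*b3 - 3*a4*b2 + 4*a4*b4 - a5*b1 - 4*a5*b3 = 0"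
    and d2_23: "-4*a1*b2 - a1*b4 + 4*a2*b1 - 3*a2*b3 + a3*b2 - 2*a3*b4 + 3*a4*b1 + 2*a5*b2 = 0"
    and d2_11_22: "4*a1^2 + 6*a1*a3 + 2*a2^2 - 6*a3*a5 - 2*a4^2 - 4*a5^2
                   + 4*b1^2 + 2*b1*b3 + 2*b2^2 - 2*b2*b4 - 2*b3^2 - 4*b4^2 = 0"
    and d2_11_33: "-4*a1*a3 - 2*a1*a5 - 6*a2*a4 - 4*a3^2 - 10*a3*a5 - 2*a4^2 - 4*a5^2
                   - 4*b1*b3 - 6*b2*b4 - 2*b3^2 - 4*b4^2 = 0"
begin

abbreviation "f \<equiv> harmonic_quartic a1 a2 a3 a4 a5 b1 b2 b3 b4"

lemma pole_zero_imp_zero: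
  assumes "a1 + 2*a3 + a5 = 0"
  shows "a1 = 0 \<and> a2 = 0 \<and> a3 = 0 \<and> a4 = 0 \<and> a5 = 0 \<and> b1 = 0 \<and> b2 = 0 \<and> b3 = 0 \<and> b4 = 0"
proof -
  have z: "f x y z = 0" for x y z using max_sphere[of x y z] assms by simp
  show ?thesis
    using z[of 1 0 0] z[of 0 1 0] z[of 1 1 0] z[of 1 "-1" 0] z[of 1 2 0]
      z[of 1 0 1] z[of 1 0 "-1"] z[of 2 0 1] z[of 2 0 "-1"]
      z[of 0 1 1] z[of 0 1 "-1"] z[of 0 2 1] z[of 0 2 "-1"]
    by (simp add: harmonic_quartic_def)
qed

lemma equator_zero_imp_pole_zero:
  assumes "a1 = 0"
  shows "a1 + 2*a3 + a5 = 0"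
proof -
  have z: "f x y 0 = 0" for x y using max_circle[of x y] assms by simp
  show ?thesis
    using z[of 1 0] z[of 0 1] z[of 1 1] z[of 1 "-1"] by (simp add: harmonic_quartic_def)
qed

end

locale extremal_harmonic_quartic_nondeg = extremal_harmonic_quartic +
  assumes pole_nonzero: "a1 + 2*a3 + a5 \<noteq> 0"
begin

lemma equator_nonzero: "a1 \<noteq> 0"
  using equator_zero_imp_pole_zero pole_nonzero by blast

lemma critical_pole: "b3 = -b1" "b4 = -b2"
proof -
  \<comment> \<open>(1 + t^2)^4 is the eighth power of the norm of (t, 0, 1) and of (0, t, 1).\<close>
  have "(a1 + 2*a3 + a5) * (-4*(b1+b3)) = 0"
  proof (rule max_at_zero_imp_critical[of _ _ "-6*(a1+a3)" "4*b1" a1])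
    fix t :: real
    show "(a1 + 2*a3 + a5 + (-4*(b1+b3))*t + (-6*(a1+a3))*t^2 + (4*b1)*t^3 + a1*t^4)^2
        \<le> (a1 + 2*a3 + a5)^2 * (1 + t^2)^4"
      using max_sphere[of t 0 1] by (simp add: harmonic_quartic_def algebra_simps)
  qed
  moreover have "(a1 + 2*a3 + a5) * (-4*(b2+b4)) = 0"
  proof (rule max_at_zero_imp_critical[of _ _ "-6*(a3+a5)" "4*b4" a5])
    fix t :: real
    show "(a1 + 2*a3 + a5 + (-4*(b2+b4))*t + (-6*(a3+a5))*t^2 + (4*b4)*t^3 + a5*t^4)^2
        \<le> (a1 + 2*a3 + a5)^2 * (1 + t^2)^4"
      using max_sphere[of 0 t 1] by (simp add: harmonic_quartic_def algebra_simps)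
  qed
  ultimately show "b3 = -b1" "b4 = -b2" using pole_nonzero by simp_all
qed

lemma critical_equator: "a2 = 0"
proof -
  have "a1 * (4*a2) = 0"
  proof (rule max_at_zero_imp_critical[of _ _ "6*a3" "4*a4" a5])
    fix t :: real
    show "(a1 + (4*a2)*t + (6*a3)*t^2 + (4*a4)*t^3 + a5*t^4)^2 \<le> a1^2 * (1 + t^2)^4"
      using max_circle[of 1 t] by (simp add: harmonic_quartic_def algebra_simps)
  qed
  then show ?thesis using equator_nonzero by simp
qed

lemma
  shows d2_12_reduced: "a4 * (3*a1 + 9*a3 + 4*a5) = 0"
    and d2_13_reduced: "-2*a1*b1 - 3*a3*b1 - 7*a4*b2 + 3*a5*b1 = 0"
    and d2_23_reduced: "-3*a1*b2 + 3*a3*b2 + 3*a4*b1 + 2*a5*b2 = 0"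
    and d2_11_22_reduced: "4*a1^2 + 6*a1*a3 - 6*a3*a5 - 2*a4^2 - 4*a5^2 = 0"
    and d2_11_33_reduced: "-4*a1*a3 - 2*a1*a5 - 4*a3^2 - 10*a3*a5 - 2*a4^2 - 4*a5^2 + 2*b1^2 + 2*b2^2 = 0"
  using d2_12 d2_13 d2_23 d2_11_22 d2_11_33
  by (simp_all add: critical_pole critical_equator algebra_simps power2_eq_square)

lemma reduced_quartic:
  "f x y z = a1*x^4 + 6*a3*x^2*y^2 + 4*a4*x*y^3 + a5*y^4
     + 4*b1*x^3*z + 12*b2*x^2*y*z - 12*b1*x*y^2*z - 4*b2*y^3*z
     - 6*(a1+a3)*x^2*z^2 - 12*a4*x*y*z^2 - 6*(a3+a5)*y^2*z^2 + (a1 + 2*a3 + a5)*z^4"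
  by (simp add: harmonic_quartic_def critical_pole critical_equator)

lemma a4_nonzero_imp:
  assumes "a4 \<noteq> 0"
  shows "b1 = 0" "b2 = 0" "3*a3 = -4*a5" "3*a1 = 8*a5" "9*a4^2 = 50*a5^2"
proof -
  have G: "3*a1 + 9*a3 + 4*a5 = 0" using d2_12_reduced assms by simp
  have k1: "18*a4^2 = 162*a3^2 + 162*a3*a5 + 28*a5^2" using d2_11_22_reduced G by algebra
  have k2: "18*(b1^2 + b2^2) = 10*((3*a3 + a5)*(3*a3 + 4*a5))"
    using d2_11_22_reduced d2_11_33_reduced G by algebra
  \<comment> \<open>The determinant of the linear system for (b1, b2) given by the reduced d2_13 and d2_23:\<close>
  define D where "D = (-2*a1 - 3*a3 + 3*a5)*(-3*a1 + 3*a3 + 2*a5) + 21*a4^2"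
  have "D*b1 = 0" "D*b2 = 0" using d2_13_reduced d2_23_reduced unfolding D_def by algebra+
  have "a5 \<noteq> -3*a3"
  proof
    assume "a5 = -3*a3"
    then have "18*a4^2 = -72*a3^2" using k1 by algebra
    then have "a4^2 \<le> 0" using zero_le_power2[of a3] by linarith
    then show False using assms by simp
  qed
  have "D \<noteq> 0"
  proof
    assume "D = 0"
    then have "(3*a3 + a5)*(9*a3 + 8*a5) = 0" using k1 G unfolding D_def by algebra
    then have "9*a3 = -8*a5" using \<open>a5 \<noteq> -3*a3\<close> by auto
    then have "162*b1^2 + 162*b2^2 + 200*a5^2 = 0" using k2 by algebra
    then have "a5^2 \<le> 0" using zero_le_power2[of b1] zero_le_power2[of b2] by linarith
    then have "a5 = 0" by simp
    then show False using \<open>9*a3 = -8*a5\<close> k1 assms by simp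
  qed
  then show b: "b1 = 0" "b2 = 0" using \<open>D*b1 = 0\<close> \<open>D*b2 = 0\<close> by simp_all
  then have "(3*a3 + a5)*(3*a3 + 4*a5) = 0" using k2 by simp
  then show a3: "3*a3 = -4*a5" using \<open>a5 \<noteq> -3*a3\<close> by auto
  then show "3*a1 = 8*a5" using G by simp
  show "9*a4^2 = 50*a5^2" using k1 a3 by algebra
qed

lemma a4_zero: "a4 = 0"
proof (rule ccontr)
  assume "a4 \<noteq> 0"
  note a = a4_nonzero_imp[OF this]
  have "f 1 1 0 = -13/3*a5 + 4*a4" "f 1 (-1) 0 = -13/3*a5 - 4*a4"
    unfolding reduced_quartic using a by simp_all
  moreover have "a1^2 * (1^2 + 1^2)^4 = (32/3*a5)^2" "a1^2 * (1^2 + (-1)^2)^4 = (32/3*a5)^2"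
    using a(4) by (simp_all add: power2_eq_square, algebra+)
  ultimately have "(-13/3*a5 + 4*a4)^2 \<le> (32/3*a5)^2" "(-13/3*a5 - 4*a4)^2 \<le> (32/3*a5)^2"
    using max_circle[of 1 1] max_circle[of 1 "-1"] by simp_all
  then have "\<bar>-13/3*a5\<bar> + \<bar>4*a4\<bar> \<le> \<bar>32/3*a5\<bar>" by (rule abs_add_abs_le_of_sq_le)
  then have "\<bar>12*a4\<bar> \<le> \<bar>19*a5\<bar>" by (simp add: abs_mult)
  then have "144*a4^2 \<le> 361*a5^2" by (simp add: abs_le_square_iff power_mult_distrib)
  then have "a5^2 \<le> 0" using a(5) by linarith
  then show False using a(5) \<open>a4 \<noteq> 0\<close> by simp
qed

lemma a5_eq_a1: "a5 = a1"
proof -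
  have "(a1 - a5)*(4*a1 + 4*a5 + 6*a3) = 0" using d2_11_22_reduced a4_zero by algebra
  moreover have "4*a1 + 4*a5 + 6*a3 \<noteq> 0"
  proof
    assume A: "4*a1 + 4*a5 + 6*a3 = 0"
    have "5*a5*b1 = 0" using d2_13_reduced a4_zero A by algebra
    have "5*a1*b2 = 0" using d2_23_reduced a4_zero A by algebra
    then have "b2 = 0" using equator_nonzero by simp
    then have b1_sq: "18*b1^2 = -(8*a1^2 + 34*a1*a5 + 8*a5^2)" using d2_11_33_reduced a4_zero A by algebra
    have "b1 = 0"
    proof (rule ccontr)
      assume "b1 \<noteq> 0"
      then have "a5 = 0" using \<open>5*a5*b1 = 0\<close> by simp
      then have "18*b1^2 + 8*a1^2 = 0" using b1_sq by simp
      then have "a1^2 \<le> 0" using zero_le_power2[of b1] by linarith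
      then show False using equator_nonzero by simp
    qed
    then have "(4*a1 + a5)*(2*a1 + 8*a5) = 0" using b1_sq by algebra
    then consider "a5 = -4*a1" | "a1 = -4*a5" by force
    then show False
    proof cases
      case 1
      moreover have "a3 = 2*a1" using A 1 by simp
      ultimately have "(-4*a1)^2 \<le> a1^2" using max_sphere[of 0 1 0] by (simp add: harmonic_quartic_def)
      then have "a1^2 \<le> 0" by (simp add: power_mult_distrib)
      then show False using equator_nonzero by simp
    next
      case 2
      moreover have "a3 = 2*a5" using A 2 by simp
      ultimately have "(-4*a5)^2 \<le> a5^2" using max_sphere[of 1 0 0] by (simp add: harmonic_quartic_def)
      then have "a5^2 \<le> 0" by (simp add: power_mult_distrib)
      then show False using equator_nonzero 2 by simp
    qed
  qed
  ultimately show ?thesis by simp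
qed

lemma a1_ne_3a3: "a1 \<noteq> 3*a3"
proof
  assume h: "a1 = 3*a3"
  have b_sq: "b1^2 + b2^2 = 50*a3^2" using d2_11_33_reduced a4_zero a5_eq_a1 h by algebra
  have "f 1 0 1 = -13*a3 + 4*b1" "f (-1) 0 1 = -13*a3 - 4*b1"
    "f 0 (-1) 1 = -13*a3 + 4*b2" "f 0 1 1 = -13*a3 - 4*b2"
    unfolding reduced_quartic using h a4_zero a5_eq_a1 by simp_all
  moreover have "(f x y z)^2 \<le> (32*a3)^2" if "x^2 + y^2 + z^2 = 2" for x y z
  proof -
    have "(a1 + 2*a3 + a5)^2 * (x^2 + y^2 + z^2)^4 = (32*a3)^2"
      using h a5_eq_a1 that by (simp add: power2_eq_square)
    then show ?thesis using max_sphere[of x y z] by simp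
  qed
  ultimately have b1_bounds: "(-13*a3 + 4*b1)^2 \<le> (32*a3)^2" "(-13*a3 - 4*b1)^2 \<le> (32*a3)^2"
    and b2_bounds: "(-13*a3 + 4*b2)^2 \<le> (32*a3)^2" "(-13*a3 - 4*b2)^2 \<le> (32*a3)^2"
    by (metis one_power2 power2_minus zero_power2 add_0 add_0_right one_add_one)+
  have "\<bar>-13*a3\<bar> + \<bar>4*b1\<bar> \<le> \<bar>32*a3\<bar>" "\<bar>-13*a3\<bar> + \<bar>4*b2\<bar> \<le> \<bar>32*a3\<bar>"
    using abs_add_abs_le_of_sq_le b1_bounds b2_bounds by blast+
  then have "\<bar>4*b1\<bar> \<le> \<bar>19*a3\<bar>" "\<bar>4*b2\<bar> \<le> \<bar>19*a3\<bar>" by (simp_all add: abs_mult)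
  then have "16*b1^2 \<le> 361*a3^2" "16*b2^2 \<le> 361*a3^2" by (simp_all add: abs_le_square_iff power_mult_distrib)
  then have "a3^2 \<le> 0" using b_sq by linarith
  then show False using h equator_nonzero by simp
qed

lemma b_zero: "b1 = 0" "b2 = 0"
proof -
  have "b1*(a1 - 3*a3) = 0" "b2*(a1 - 3*a3) = 0"
    using d2_13_reduced d2_23_reduced a4_zero a5_eq_a1 by algebra+
  then show "b1 = 0" "b2 = 0" using a1_ne_3a3 by simp_all
qed

lemma a3_eq: "2*a3 = -a1"
proof -
  have "(3*a1 + a3)*(a1 + 2*a3) = 0" using d2_11_33_reduced a4_zero a5_eq_a1 b_zero by algebra
  moreover have "a3 \<noteq> -3*a1"
  proof
    assume "a3 = -3*a1"
    then have "f 1 1 0 = -16*a1" unfolding reduced_quartic using a4_zero a5_eq_a1 by simp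
    then have "(-16*a1)^2 \<le> a1^2 * 16" using max_circle[of 1 1] by simp
    then have "a1^2 \<le> 0" by (simp add: power_mult_distrib)
    then show False using equator_nonzero by simp
  qed
  ultimately show ?thesis by auto
qed

end

lemma (in extremal_harmonic_quartic) cubic_coefficients:
  "a2 = 0 \<and> a4 = 0 \<and> b1 = 0 \<and> b2 = 0 \<and> b3 = 0 \<and> b4 = 0 \<and> a5 = a1 \<and> 2*a3 = -a1"
proof (cases "a1 + 2*a3 + a5 = 0")
  case True
  then show ?thesis using pole_zero_imp_zero by simp
next
  case False
  then interpret extremal_harmonic_quartic_nondeg a1 a2 a3 a4 a5 b1 b2 b3 b4
    by unfold_locales
  show ?thesis using critical_pole critical_equator a4_zero a5_eq_a1 b_zero a3_eq by simp
qed

lemma inner_vector3: "(vector [x,y,z] :: real^3) \<bullet> vector [x,y,z] = x^2 + y^2 + z^2"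
  by (simp add: inner_vec_def sum_3 power2_eq_square)

lemma cubic_of_extremal_frame:
  assumes K: "K \<in> H4" and iso: "d2 K = (\<lambda>i j. if i = j then c else 0)"
    and max_sphere: "\<And>y. (quartic_form K y)^2 \<le> (quartic_form K (vector [0,0,1]))^2 * (y \<bullet> y)^4"
    and max_circle: "\<And>y. y$3 = 0 \<Longrightarrow>
                       (quartic_form K y)^2 \<le> (quartic_form K (vector [1,0,0]))^2 * (y \<bullet> y)^4"
  shows "K = (\<lambda>i j k l. (5/2 * K 1 1 1 1) * cubic_tensor i j k l)"
proof -
  interpret extremal_harmonic_quartic "K 1 1 1 1" "K 1 1 1 2" "K 1 1 2 2" "K 1 2 2 2" "K 2 2 2 2"
    "K 1 1 1 3" "K 1 1 2 3" "K 1 2 2 3" "K 2 2 2 3"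
  proof
    fix x y z :: real
    show "(harmonic_quartic (K 1 1 1 1) (K 1 1 1 2) (K 1 1 2 2) (K 1 2 2 2) (K 2 2 2 2)
            (K 1 1 1 3) (K 1 1 2 3) (K 1 2 2 3) (K 2 2 2 3) x y z)^2
        \<le> (K 1 1 1 1 + 2 * K 1 1 2 2 + K 2 2 2 2)^2 * (x^2 + y^2 + z^2)^4"
      using max_sphere[of "vector [x,y,z]"]
      by (simp add: quartic_form_H4[OF K] inner_vector3 harmonic_quartic_def)
    show "(harmonic_quartic (K 1 1 1 1) (K 1 1 1 2) (K 1 1 2 2) (K 1 2 2 2) (K 2 2 2 2)
            (K 1 1 1 3) (K 1 1 2 3) (K 1 2 2 3) (K 2 2 2 3) x y 0)^2
        \<le> (K 1 1 1 1)^2 * (x^2 + y^2)^4"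
      using max_circle[of "vector [x,y,0]"]
      by (simp add: quartic_form_H4[OF K] inner_vector3 harmonic_quartic_def)
  qed (use d2_H4[OF K] iso in simp_all)
  show ?thesis
    using cubic_coefficients
    by (simp add: fun_eq_iff forall_3 H4_sym[OF K] H4_trace33[OF K] cubic_tensor_def)
qed

section \<open>Isotropy of the quadratic covariants\<close>

lemma cubic_of_d2_scalar:
  assumes H: "H \<in> H4" and nonzero: "H \<noteq> (\<lambda>i j k l. 0)"
    and iso: "d2 H = (\<lambda>i j. if i = j then c else 0)"
  shows "in_class (symgroup4 H) Octa"
proof -
  obtain g where g: "g \<in> SO3"
    and max_sphere: "\<And>y. (quartic_form (act4 g H) y)^2
                          \<le> (quartic_form (act4 g H) (vector [0,0,1]))^2 * (y \<bullet> y)^4"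
    and max_circle: "\<And>y. y$3 = 0 \<Longrightarrow> (quartic_form (act4 g H) y)^2
                          \<le> (quartic_form (act4 g H) (vector [1,0,0]))^2 * (y \<bullet> y)^4"
    using extremal_frame[of H] by blast
  have o: "orthogonal_matrix g" using g by (rule SO3_orthogonal)
  define K where "K = act4 g H"
  define \<mu> where "\<mu> = 5/2 * K 1 1 1 1"
  have "K \<in> H4" unfolding K_def using o H by (rule act4_H4)
  moreover have "d2 K = (\<lambda>i j. if i = j then c else 0)"
    unfolding K_def by (simp add: d2_act4[OF o H] iso act2_scalar_identity[OF o])
  ultimately have K_cubic: "K = (\<lambda>i j k l. \<mu> * cubic_tensor i j k l)"
    unfolding \<mu>_def using max_sphere max_circle by (intro cubic_of_extremal_frame) (simp_all add: K_def)
  have H_eq: "H = act4 (transpose g) K" unfolding K_def by (simp add: act4_transpose_cancel[OF o])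
  have "\<mu> \<noteq> 0"
  proof
    assume "\<mu> = 0"
    then have "H = act4 (transpose g) (\<lambda>i j k l. 0)" using H_eq K_cubic by simp
    with nonzero show False by (simp add: act4_def)
  qed
  then have "symgroup4 K = Octa" by (simp add: K_cubic symgroup4_scale symgroup4_cubic_tensor)
  then have "symgroup4 H = (\<lambda>h. transpose g ** h ** matrix_inv (transpose g)) ` Octa"
    using H_eq symgroup4_act[OF SO3_transpose[OF g]] by simp
  then show ?thesis unfolding in_class_def using SO3_transpose[OF g] by blast
qed

lemma Cov2_fixed_of_Octa_class:
  assumes H: "H \<in> H4" and F: "equiv_poly_map2 F"
    and cubic: "in_class (symgroup4 H) Octa" and g: "g \<in> SO3"
  shows "act2 g (F H) = F H"
proof -
  obtain q where q: "q \<in> SO3" and sym: "symgroup4 H = (\<lambda>h. q ** h ** matrix_inv q) ` Octa"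
    using cubic unfolding in_class_def by blast
  have o: "orthogonal_matrix q" using q by (rule SO3_orthogonal)
  have equivariant: "F (act4 k H) = act2 k (F H)" if "k \<in> SO3" for k
    using F H that by (simp add: equiv_poly_map2_def)
  define S where "S = act2 (transpose q) (F H)"
  have "act2 r S = S" if r: "r \<in> Octa" for r
  proof -
    have "q ** r ** transpose q \<in> symgroup4 H"
      using sym r by (auto simp: matrix_inv_orthogonal[OF o])
    then have "q ** r ** transpose q \<in> SO3" "act4 (q ** r ** transpose q) H = H"
      by (simp_all add: symgroup4_def)
    then have "act2 (q ** r ** transpose q) (F H) = F H" using equivariant by metis
    then have "act2 (transpose q) (act2 q (act2 r S)) = S" by (simp add: act2_mult S_def)
    then show ?thesis by (simp add: act2_transpose_cancel[OF o])
  qed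
  then have "S = (\<lambda>i j. if i = j then S 1 1 else 0)" by (rule Octa_fixed_scalar)
  then have "F H = (\<lambda>i j. if i = j then S 1 1 else 0)"
    using act2_transpose_cancel(2)[OF o, of "F H"] act2_scalar_identity[OF o] by (simp add: S_def)
  then show ?thesis using act2_scalar_identity[OF SO3_orthogonal[OF g]] by simp
qed

lemma in_class_SO3_symgroup2_iff: "in_class (symgroup2 S) SO3 \<longleftrightarrow> (\<forall>g\<in>SO3. act2 g S = S)"
  unfolding in_class_SO3_iff symgroup2_def by auto

lemma in_class_SO3_symgroup2_fam_iff:
  "in_class (symgroup2_fam F) SO3 \<longleftrightarrow> (\<forall>g\<in>SO3. \<forall>S\<in>F. act2 g S = S)"
  unfolding in_class_SO3_iff symgroup2_fam_def symgroup2_def by auto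

lemma cubic_or_isotropic_of_d2_fixed:
  assumes H: "H \<in> H4" and fixed: "\<forall>g\<in>SO3. act2 g (d2 H) = d2 H"
  shows "(d2 H \<noteq> (\<lambda>i j. 0) \<and> in_class (symgroup4 H) Octa)
       \<or> (d2 H = (\<lambda>i j. 0) \<and> in_class (symgroup4 H) SO3)"
proof (cases "H = (\<lambda>i j k l. 0)")
  case True
  then show ?thesis by (simp add: d2_def symgroup4_def act4_def in_class_SO3_iff)
next
  case False
  have "d2 H = (\<lambda>i j. if i = j then d2 H 1 1 else 0)"
    using fixed Octa_fixed_scalar Octa_SO3 by blast
  then show ?thesis using cubic_of_d2_scalar[OF H False] d2_eq_0_iff[OF H] False by blast
qed

lemma Cov2_fixed_of_cubic_or_isotropic:
  assumes H: "H \<in> H4"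
    and cls: "in_class (symgroup4 H) Octa \<or> in_class (symgroup4 H) SO3"
    and g: "g \<in> SO3" and S: "S \<in> Cov2 H"
  shows "act2 g S = S"
proof -
  obtain F where F: "equiv_poly_map2 F" and S_eq: "S = F H" using S by (auto simp: Cov2_def)
  from cls show ?thesis
  proof
    assume "in_class (symgroup4 H) Octa"
    then show ?thesis using Cov2_fixed_of_Octa_class[OF H F _ g] S_eq by simp
  next
    assume "in_class (symgroup4 H) SO3"
    then have "act4 g H = H" using g by (auto simp: in_class_SO3_iff symgroup4_def)
    then show ?thesis using F H g S_eq by (metis equiv_poly_map2_def)
  qed
qed

theorem theorem9p3:
  assumes "H \<in> H4"
  shows "(in_class (symgroup2_fam (Cov2 H)) SO3
            \<longleftrightarrow> ((d2 H \<noteq> (\<lambda>i j. 0) \<and> in_class (symgroup4 H) Octa)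
                 \<or> (d2 H = (\<lambda>i j. 0) \<and> in_class (symgroup4 H) SO3)))
       \<and> (in_class (symgroup2_fam (Cov2 H)) SO3 \<longleftrightarrow> in_class (symgroup2 (d2 H)) SO3)"
proof -
  have "in_class (symgroup2_fam (Cov2 H)) SO3 \<Longrightarrow> in_class (symgroup2 (d2 H)) SO3"
    using d2_in_Cov2 by (simp add: in_class_SO3_symgroup2_fam_iff in_class_SO3_symgroup2_iff)
  moreover have "in_class (symgroup2 (d2 H)) SO3 \<Longrightarrow>
      (d2 H \<noteq> (\<lambda>i j. 0) \<and> in_class (symgroup4 H) Octa) \<or> (d2 H = (\<lambda>i j. 0) \<and> in_class (symgroup4 H) SO3)"
    using cubic_or_isotropic_of_d2_fixed[OF assms] by (simp add: in_class_SO3_symgroup2_iff)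
  moreover have "(d2 H \<noteq> (\<lambda>i j. 0) \<and> in_class (symgroup4 H) Octa)
      \<or> (d2 H = (\<lambda>i j. 0) \<and> in_class (symgroup4 H) SO3) \<Longrightarrow> in_class (symgroup2_fam (Cov2 H)) SO3"
    using Cov2_fixed_of_cubic_or_isotropic[OF assms] by (auto simp: in_class_SO3_symgroup2_fam_iff)
  ultimately show ?thesis by blast
qed

end
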